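(* Let $\lambda\in\mathbb{R}$, let $r\ge0$ be an integer and let $z\in\mathbb{C}$. Then, as formal power series in $t$, \[ \sum_{n=0}^{\infty}\phi_{n,\lambda}^{(r)}(|z|^2)\frac{t^n}{n!}=\langle z|\,e_\lambda^{a^{\dagger}a+r}(t)\,|z\rangle=e_\lambda^{r}(t)\,e^{|z|^2(e_\lambda(t)-1)}. \]
   Context: Notation: $(x)_0=1$, $(x)_m=x(x-1)\cdots(x-m+1)$; $(y)_{0,\lambda}=1$, $(y)_{n,\lambda}=y(y-\lambda)\cdots(y-(n-1)\lambda)$ (also for operators $y$). The degenerate exponential is $e_\lambda^{x}(t)=\sum_{k\ge0}(x)_{k,\lambda}\frac{t^k}{k!}$ (i.e. $(1+\lambda t)^{x/\lambda}$), $e_\lambda(t)=e_\lambda^1(t)$, and for an operator $X$, $e_\lambda^{X}(t)=\sum_{n\ge0}(X)_{n,\lambda}\frac{t^n}{n!}$. The degenerate $r$-Stirling numbers of the second kind ${n+r\brace k+r}_{r,\lambda}$ are defined by $(x+r)_{n,\lambda}=\sum_{k=0}^{n}{n+r\brace k+r}_{r,\lambda}(x)_k$ ($n\ge0$), and the degenerate $r$-Bell polynomials are $\phi_{n,\lambda}^{(r)}(x)=\sum_{k=0}^{n}{n+r\brace k+r}_{r,\lambda}x^k$. The boson operators $a,a^{\dagger}$ satisfy $[a,a^{\dagger}]=1$ and act on orthonormal number states $|m\rangle$ by $a|m\rangle=\sqrt{m}|m-1\rangle$, $a^{\dagger}|m\rangle=\sqrt{m+1}|m+1\rangle$; the coherent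 state is $|z\rangle=e^{-|z|^2/2}\sum_{n\ge0}\frac{z^n}{\sqrt{n!}}|n\rangle$, with $a|z\rangle=z|z\rangle$, $\langle z|z\rangle=1$. *)

theory Defs
  imports "HOL-Analysis.Analysis" "HOL-Computational_Algebra.Formal_Power_Series"
begin

definition ffall :: "real \<Rightarrow> nat \<Rightarrow> real" where
  "ffall x m = (\<Prod>k<m. x - of_nat k)"

definition dfall :: "real \<Rightarrow> real \<Rightarrow> nat \<Rightarrow> real" where
  "dfall lam y n = (\<Prod>k<n. y - of_nat k * lam)"

(* degenerate r-Stirling numbers of the second kind {n+r, k+r}_{r,lambda}:
   the unique coefficients with (x+r)_{n,lambda} = sum_{k=0}^n S(n,k) (x)_k for all x *)
definition deg_rstirling2 :: "real \<Rightarrow> nat \<Rightarrow> nat \<Rightarrow> nat \<Rightarrow> real" where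
  "deg_rstirling2 lam r n =
     (THE S. (\<forall>x::real. dfall lam (x + real r) n = (\<Sum>k\<le>n. S k * ffall x k))
             \<and> (\<forall>k>n. S k = 0))"

definition deg_rbell :: "real \<Rightarrow> nat \<Rightarrow> nat \<Rightarrow> real \<Rightarrow> real" where
  "deg_rbell lam r n x = (\<Sum>k\<le>n. deg_rstirling2 lam r n k * x ^ k)"

(* Fock space: a state is given by its coefficients w.r.t. the orthonormal number states |m> *)
type_synonym state = "nat \<Rightarrow> complex"

(* annihilation operator a: a|m> = sqrt m |m-1> *)
definition ann :: "state \<Rightarrow> state" where
  "ann \<psi> = (\<lambda>m. complex_of_real (sqrt (real (Suc m))) * \<psi> (Suc m))"

(* creation operator a^dagger: a^dagger|m> = sqrt(m+1) |m+1> *)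
definition cre :: "state \<Rightarrow> state" where
  "cre \<psi> = (\<lambda>m. if m = 0 then 0 else complex_of_real (sqrt (real m)) * \<psi> (m - 1))"

definition braket :: "state \<Rightarrow> state \<Rightarrow> complex" where
  "braket \<phi> \<psi> = (\<Sum>m. cnj (\<phi> m) * \<psi> m)"

definition coherent :: "complex \<Rightarrow> state" where
  "coherent z = (\<lambda>n. complex_of_real (exp (- ((cmod z) ^ 2) / 2)) * z ^ n
                      / complex_of_real (sqrt (fact n :: real)))"

primrec op_dfall :: "real \<Rightarrow> (state \<Rightarrow> state) \<Rightarrow> nat \<Rightarrow> state \<Rightarrow> state" where
  "op_dfall lam X 0 = id"
| "op_dfall lam X (Suc n) =
     (\<lambda>\<psi>. (\<lambda>m. X \<psi> m - complex_of_real (real n * lam) * \<psi> m)) \<circ> op_dfall lam X n"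

definition dexp_fps :: "real \<Rightarrow> real \<Rightarrow> complex fps" where
  "dexp_fps lam x = Abs_fps (\<lambda>k. complex_of_real (dfall lam x k / fact k))"

end

theory Submission
  imports Defs
begin

(*
  Since a^dagger a |m> = m |m>, the operator (a^dagger a + r)_{n,lambda} is diagonal in the
  number basis with eigenvalue (m + r)_{n,lambda} = sum_k S(n,k) (m)_k, where S(n,k) are the
  degenerate r-Stirling numbers.  Against the Poisson weights |<m|z>|^2 = e^(-x) x^m / m!
  (x = |z|^2), the identity sum_m (m)_k x^m / m! = x^k e^x turns <z| ... |z> into the
  degenerate r-Bell polynomial phi_n(x).

  For the closed form, e_lambda^a(t) is the solution of (1 + lambda t) F' = a F with F(0) = 1,
  which gives e_lambda^a e_lambda^b = e_lambda^(a+b).  Hence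
  e_lambda^(m+r) = e_lambda^r (1 + (e_lambda - 1))^m = sum_k (m)_k e_lambda^r (e_lambda - 1)^k / k!,
  and comparing coefficients of (m)_k for m = 0, ..., n identifies
  sum_n S(n,k) t^n / n! = e_lambda^r (e_lambda - 1)^k / k!.  Summing against x^k gives
  e_lambda^r exp(x (e_lambda - 1)).
*)

lemma ffall_Suc: "ffall x (Suc k) = ffall x k * (x - of_nat k)"
  by (simp add: ffall_def lessThan_Suc)

lemma dfall_Suc: "dfall lam x (Suc k) = dfall lam x k * (x - of_nat k * lam)"
  by (simp add: dfall_def lessThan_Suc)

lemma ffall_0 [simp]: "ffall x 0 = 1"
  by (simp add: ffall_def)

lemma dfall_0 [simp]: "dfall lam x 0 = 1"
  by (simp add: dfall_def)

lemma ffall_of_nat: "ffall (real m) k = real (m choose k) * fact k"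
proof -
  have "real (m choose k) = ffall (real m) k / fact k"
    by (simp add: binomial_gbinomial gbinomial_prod_rev ffall_def atLeast0LessThan)
  then show ?thesis by simp
qed

lemma ffall_of_nat_eq_0: "m < k \<Longrightarrow> ffall (real m) k = 0"
  by (simp add: ffall_of_nat)

text \<open>For \<open>j, k \<le> n\<close> the matrix \<open>ffall (real j) k\<close> is triangular with diagonal \<open>fact j \<noteq> 0\<close>.\<close>
lemma ffall_combination_eq_0:
  fixes C :: "nat \<Rightarrow> 'a::real_vector"
  assumes zero: "\<And>j. j \<le> n \<Longrightarrow> (\<Sum>k\<le>n. ffall (real j) k *\<^sub>R C k) = 0"
  shows "k \<le> n \<Longrightarrow> C k = 0"
proof (induction k rule: less_induct)
  case (less k)
  have "(\<Sum>i\<in>{..n} - {k}. ffall (real k) i *\<^sub>R C i) = 0"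
    using less by (intro sum.neutral) (auto simp: ffall_of_nat_eq_0 nat_neq_iff)
  then have "(\<Sum>i\<le>n. ffall (real k) i *\<^sub>R C i) = fact k *\<^sub>R C k"
    using less.prems by (simp add: sum.remove ffall_of_nat)
  then show ?case
    using zero [OF less.prems] by simp
qed

text \<open>The recurrence comes from multiplying the expansion of \<open>dfall lam (x + r) n\<close> by
  \<open>x + r - n * lam\<close> and using \<open>x * ffall x k = ffall x (Suc k) + k * ffall x k\<close>.\<close>
fun deg_rstirling2_rec :: "real \<Rightarrow> nat \<Rightarrow> nat \<Rightarrow> nat \<Rightarrow> real" where
  "deg_rstirling2_rec lam r 0 k = (if k = 0 then 1 else 0)"
| "deg_rstirling2_rec lam r (Suc n) k =
     (if k = 0 then 0 else deg_rstirling2_rec lam r n (k - 1))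
     + (real k + real r - real n * lam) * deg_rstirling2_rec lam r n k"

lemma deg_rstirling2_rec_eq_0: "n < k \<Longrightarrow> deg_rstirling2_rec lam r n k = 0"
  by (induction n arbitrary: k) auto

lemma dfall_eq_sum_deg_rstirling2_rec:
  "dfall lam (x + real r) n = (\<Sum>k\<le>n. deg_rstirling2_rec lam r n k * ffall x k)"
proof (induction n)
  case 0
  then show ?case by simp
next
  case (Suc n)
  let ?S = "deg_rstirling2_rec lam r n"
  have "dfall lam (x + real r) (Suc n) = (\<Sum>k\<le>n. ?S k * ffall x k) * (x + real r - real n * lam)"
    by (simp add: dfall_Suc Suc.IH)
  also have "\<dots> = (\<Sum>k\<le>n. ?S k * ffall x (Suc k))
                 + (\<Sum>k\<le>n. (real k + real r - real n * lam) * ?S k * ffall x k)"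
    by (simp only: sum_distrib_right sum.distrib [symmetric])
      (rule sum.cong, simp_all add: ffall_Suc algebra_simps)
  also have "(\<Sum>k\<le>n. ?S k * ffall x (Suc k))
             = (\<Sum>k\<le>Suc n. (if k = 0 then 0 else ?S (k - 1)) * ffall x k)"
    by (simp only: sum.atMost_Suc_shift) simp
  also have "(\<Sum>k\<le>n. (real k + real r - real n * lam) * ?S k * ffall x k)
             = (\<Sum>k\<le>Suc n. (real k + real r - real n * lam) * ?S k * ffall x k)"
    by (simp add: deg_rstirling2_rec_eq_0)
  finally show ?case
    by (simp add: sum.distrib [symmetric] algebra_simps)
qed

lemma deg_rstirling2_rec_unique:
  fixes C :: "nat \<Rightarrow> 'a::real_algebra_1"
  assumes C: "\<And>j. j \<le> n \<Longrightarrow>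
    (\<Sum>i\<le>n. of_real (ffall (real j) i) * C i) = of_real (dfall lam (real j + real r) n)"
    and "k \<le> n"
  shows "C k = of_real (deg_rstirling2_rec lam r n k)"
proof -
  have "(\<Sum>i\<le>n. ffall (real j) i *\<^sub>R (C i - of_real (deg_rstirling2_rec lam r n i))) = 0"
    if "j \<le> n" for j
    using C [OF that]
    by (simp add: scaleR_conv_of_real algebra_simps sum_subtractf
        dfall_eq_sum_deg_rstirling2_rec [of lam "real j"] flip: of_real_mult)
  from ffall_combination_eq_0 [OF this \<open>k \<le> n\<close>] show ?thesis
    by simp
qed

lemma deg_rstirling2_eq_rec: "deg_rstirling2 lam r n = deg_rstirling2_rec lam r n"
  unfolding deg_rstirling2_def
proof (rule the_equality)
  show "(\<forall>x. dfall lam (x + real r) n = (\<Sum>k\<le>n. deg_rstirling2_rec lam r n k * ffall x k))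
        \<and> (\<forall>k>n. deg_rstirling2_rec lam r n k = 0)"
    by (simp add: dfall_eq_sum_deg_rstirling2_rec deg_rstirling2_rec_eq_0)
next
  fix S
  assume S: "(\<forall>x. dfall lam (x + real r) n = (\<Sum>k\<le>n. S k * ffall x k)) \<and> (\<forall>k>n. S k = 0)"
  show "S = deg_rstirling2_rec lam r n"
  proof
    fix k
    show "S k = deg_rstirling2_rec lam r n k"
    proof (cases "k \<le> n")
      case True
      with S show ?thesis
        using deg_rstirling2_rec_unique [where C = S] by (simp add: mult.commute)
    next
      case False
      with S show ?thesis by (simp add: deg_rstirling2_rec_eq_0)
    qed
  qed
qed

lemma cre_ann: "cre (ann \<psi>) m = of_nat m * \<psi> m"
proof (cases m)
  case (Suc j)
  have "complex_of_real (sqrt (real m)) * complex_of_real (sqrt (real m)) = of_nat m"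
    by (simp flip: of_real_mult)
  then show ?thesis
    using Suc by (simp add: cre_def ann_def mult.assoc [symmetric])
qed (simp add: cre_def)

lemma op_dfall_diagonal:
  assumes "\<And>\<phi> j. X \<phi> j = of_real (c j) * \<phi> j"
  shows "op_dfall lam X n \<psi> m = of_real (dfall lam (c m) n) * \<psi> m"
  by (induction n) (simp_all add: assms dfall_Suc algebra_simps)

lemma sums_ffall_exp: "(\<lambda>m. ffall (real m) k * (x ^ m / fact m)) sums (x ^ k * exp x)"
proof -
  have shifted: "ffall (real (i + k)) k * (x ^ (i + k) / fact (i + k)) = x ^ k * (x ^ i /\<^sub>R fact i)"
    for i
  proof -
    have "ffall (real (i + k)) k = fact (i + k) / fact i"
      unfolding ffall_of_nat by (simp add: binomial_fact field_simps)
    then show ?thesis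
      by (simp add: power_add field_simps)
  qed
  have "(\<lambda>i. x ^ k * (x ^ i /\<^sub>R fact i)) sums (x ^ k * exp x)"
    by (intro sums_mult exp_converges)
  then have "(\<lambda>m. ffall (real m) k * (x ^ m / fact m)) sums
               (x ^ k * exp x + (\<Sum>m<k. ffall (real m) k * (x ^ m / fact m)))"
    by (subst sums_iff_shift [symmetric]) (simp only: shifted)
  then show ?thesis
    by (simp add: ffall_of_nat_eq_0)
qed

lemma cnj_coherent_mult_coherent:
  "cnj (coherent z m) * coherent z m = of_real (exp (- (cmod z ^ 2)) * (cmod z ^ 2) ^ m / fact m)"
proof -
  have "exp (- (cmod z ^ 2) / 2) ^ 2 = exp (- (cmod z ^ 2))"
    by (simp add: power2_eq_square flip: exp_add)
  moreover have "(cmod z ^ m) ^ 2 = (cmod z ^ 2) ^ m"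
    by (simp add: mult.commute flip: power_mult)
  ultimately have "cmod (coherent z m) ^ 2 = exp (- (cmod z ^ 2)) * (cmod z ^ 2) ^ m / fact m"
    by (simp add: coherent_def norm_mult norm_divide norm_power power_mult_distrib power_divide)
  then show ?thesis
    by (simp add: mult.commute flip: complex_norm_square)
qed

lemma braket_coherent_diagonal:
  "braket (coherent z) (\<lambda>m. of_real (\<Sum>k\<le>n. S k * ffall (real m) k) * coherent z m)
   = of_real (\<Sum>k\<le>n. S k * (cmod z ^ 2) ^ k)"
proof -
  define x where "x = cmod z ^ 2"
  have "(\<lambda>m. \<Sum>k\<le>n. S k * (ffall (real m) k * (x ^ m / fact m)))
          sums (\<Sum>k\<le>n. S k * (x ^ k * exp x))"
    by (intro sums_sum sums_mult sums_ffall_exp)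
  then have "(\<lambda>m. exp (- x) * ((\<Sum>k\<le>n. S k * ffall (real m) k) * x ^ m / fact m))
               sums (exp (- x) * ((\<Sum>k\<le>n. S k * x ^ k) * exp x))"
    by (intro sums_mult) (simp add: sum_distrib_left sum_distrib_right sum_divide_distrib mult_ac)
  then have "(\<lambda>m. exp (- x) * ((\<Sum>k\<le>n. S k * ffall (real m) k) * x ^ m / fact m))
               sums (\<Sum>k\<le>n. S k * x ^ k)"
    by (simp add: exp_minus field_simps)
  then have "(\<lambda>m. of_real (exp (- x) * ((\<Sum>k\<le>n. S k * ffall (real m) k) * x ^ m / fact m)))
               sums (of_real (\<Sum>k\<le>n. S k * x ^ k) :: complex)"
    by (rule sums_of_real)
  moreover have "cnj (coherent z m) * (of_real (\<Sum>k\<le>n. S k * ffall (real m) k) * coherent z m)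
      = of_real (exp (- x) * ((\<Sum>k\<le>n. S k * ffall (real m) k) * x ^ m / fact m))" for m
    unfolding mult.left_commute [of "cnj _"] cnj_coherent_mult_coherent x_def
    by (simp only: of_real_mult [symmetric]) (simp add: mult_ac)
  ultimately show ?thesis
    unfolding braket_def x_def by (simp add: sums_iff)
qed

lemma braket_coherent_op_dfall:
  "braket (coherent z) (op_dfall lam (\<lambda>\<psi> m. cre (ann \<psi>) m + of_nat r * \<psi> m) n (coherent z))
   = of_real (deg_rbell lam r n (cmod z ^ 2))"
proof -
  have "op_dfall lam (\<lambda>\<psi> m. cre (ann \<psi>) m + of_nat r * \<psi> m) n (coherent z)
        = (\<lambda>m. of_real (dfall lam (real m + real r) n) * coherent z m)"
    by (rule ext, rule op_dfall_diagonal) (simp add: cre_ann algebra_simps)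
  then show ?thesis
    unfolding dfall_eq_sum_deg_rstirling2_rec
    by (simp only: braket_coherent_diagonal) (simp add: deg_rbell_def deg_rstirling2_eq_rec)
qed

unbundle no vec_syntax
unbundle fps_syntax

lemma dexp_fps_nth [simp]: "dexp_fps lam x $ n = of_real (dfall lam x n / fact n)"
  by (simp add: dexp_fps_def)

lemma one_plus_const_X_mult_deriv_nth:
  fixes F :: "'a::comm_ring_1 fps"
  shows "((1 + fps_const c * fps_X) * fps_deriv F) $ n
         = of_nat (n + 1) * F $ Suc n + c * of_nat n * F $ n"
  by (cases n) (simp_all add: algebra_simps)

lemma dexp_fps_deriv:
  "(1 + fps_const (of_real lam) * fps_X) * fps_deriv (dexp_fps lam a)
   = fps_const (of_real a) * dexp_fps lam a"
proof (rule fps_ext)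
  fix n
  have "real (n + 1) * (dfall lam a (Suc n) / fact (Suc n)) = dfall lam a (Suc n) / fact n"
    by (simp add: field_simps del: of_nat_Suc)
  then have recurrence:
    "real (n + 1) * (dfall lam a (Suc n) / fact (Suc n)) + lam * real n * (dfall lam a n / fact n)
     = a * (dfall lam a n / fact n)"
    by (simp add: dfall_Suc field_simps)
  have "((1 + fps_const (of_real lam) * fps_X) * fps_deriv (dexp_fps lam a)) $ n
        = of_real (real (n + 1) * (dfall lam a (Suc n) / fact (Suc n))
                   + lam * real n * (dfall lam a n / fact n))"
    unfolding one_plus_const_X_mult_deriv_nth
    by (simp only: dexp_fps_nth of_real_add of_real_mult of_real_of_nat_eq)
  also have "\<dots> = (fps_const (of_real a) * dexp_fps lam a) $ n"
    by (simp only: recurrence) simp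
  finally show "((1 + fps_const (of_real lam) * fps_X) * fps_deriv (dexp_fps lam a)) $ n
                = (fps_const (of_real a) * dexp_fps lam a) $ n" .
qed

lemma dexp_fps_unique:
  assumes F0: "F $ 0 = 1"
    and deriv: "(1 + fps_const (of_real lam) * fps_X) * fps_deriv F = fps_const (of_real a) * F"
  shows "F = dexp_fps lam a"
proof (rule fps_ext)
  fix n
  let ?G = "dexp_fps lam a"
  show "F $ n = ?G $ n"
  proof (induction n)
    case 0
    then show ?case using F0 by simp
  next
    case (Suc n)
    have "of_nat (n + 1) * F $ Suc n + of_real lam * of_nat n * F $ n = of_real a * F $ n"
      using arg_cong [OF deriv, of "\<lambda>H. H $ n"]
      by (simp only: one_plus_const_X_mult_deriv_nth) simp
    moreover have "of_nat (n + 1) * ?G $ Suc n + of_real lam * of_nat n * ?G $ n = of_real a * ?G $ n"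
      using arg_cong [OF dexp_fps_deriv, of "\<lambda>H. H $ n"]
      by (simp only: one_plus_const_X_mult_deriv_nth) simp
    ultimately have "of_nat (Suc n) * F $ Suc n = of_nat (Suc n) * ?G $ Suc n"
      unfolding Suc.IH Suc_eq_plus1 by (metis add_right_cancel)
    then show ?case
      by (simp del: of_nat_Suc dexp_fps_nth)
  qed
qed

lemma dexp_fps_add: "dexp_fps lam a * dexp_fps lam b = dexp_fps lam (a + b)"
proof (rule dexp_fps_unique)
  let ?L = "1 + fps_const (complex_of_real lam) * fps_X"
  have "?L * fps_deriv (dexp_fps lam a * dexp_fps lam b)
        = (?L * fps_deriv (dexp_fps lam a)) * dexp_fps lam b
          + dexp_fps lam a * (?L * fps_deriv (dexp_fps lam b))"
    by (simp add: algebra_simps)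
  also have "\<dots> = fps_const (of_real (a + b)) * (dexp_fps lam a * dexp_fps lam b)"
    by (simp only: dexp_fps_deriv) (simp add: algebra_simps flip: fps_const_add)
  finally show "?L * fps_deriv (dexp_fps lam a * dexp_fps lam b)
                = fps_const (of_real (a + b)) * (dexp_fps lam a * dexp_fps lam b)" .
qed simp

lemma dexp_fps_0: "dexp_fps lam 0 = 1"
  by (rule fps_ext) (auto simp: dfall_def)

lemma dexp_fps_power: "dexp_fps lam a ^ m = dexp_fps lam (real m * a)"
  by (induction m) (simp_all add: dexp_fps_0 dexp_fps_add algebra_simps)

lemma fps_mult_compose_nth:
  fixes A D G :: "'a::comm_ring_1 fps"
  assumes G0: "G $ 0 = 0"
  shows "(D * (A oo G)) $ n = (\<Sum>i\<le>n. A $ i * (D * G ^ i) $ n)"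
proof -
  have compose: "(A oo G) $ j = (\<Sum>i\<le>n. A $ i * (G ^ i) $ j)" if "j \<le> n" for j
    unfolding fps_compose_nth atLeast0AtMost
    by (rule sum.mono_neutral_left) (use that startsby_zero_power_prefix [OF G0] in auto)
  have "(D * (A oo G)) $ n = (\<Sum>j=0..n. D $ j * (\<Sum>i\<le>n. A $ i * (G ^ i) $ (n - j)))"
    unfolding fps_mult_nth by (intro sum.cong) (simp_all add: compose)
  also have "\<dots> = (\<Sum>i\<le>n. A $ i * (D * G ^ i) $ n)"
    unfolding fps_mult_nth sum_distrib_left by (subst sum.swap) (simp add: mult_ac)
  finally show ?thesis .
qed

lemma dexp_fps_power_binomial:
  "(D * dexp_fps lam 1 ^ m) $ n
   = (\<Sum>k\<le>m. of_nat (m choose k) * (D * (dexp_fps lam 1 - 1) ^ k) $ n)"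
proof -
  have "dexp_fps lam 1 ^ m = ((dexp_fps lam 1 - 1) + 1) ^ m"
    by simp
  also have "\<dots> = (\<Sum>k\<le>m. of_nat (m choose k) * (dexp_fps lam 1 - 1) ^ k)"
    by (subst binomial_ring) simp
  finally show ?thesis
    by (simp add: sum_distrib_left fps_sum_nth mult.left_commute [of D] flip: fps_of_nat)
qed

lemma deg_rstirling2_egf_nth:
  "(dexp_fps lam (real r) * (dexp_fps lam 1 - 1) ^ k) $ n
   = of_real (fact k * deg_rstirling2 lam r n k / fact n)"
proof (cases "k \<le> n")
  case True
  define P where "P i = (dexp_fps lam (real r) * (dexp_fps lam 1 - 1) ^ i) $ n" for i
  have "(\<Sum>i\<le>n. of_real (ffall (real j) i) * (of_nat (fact n) / of_nat (fact i) * P i))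
        = of_real (dfall lam (real j + real r) n)" if "j \<le> n" for j
  proof -
    have "(\<Sum>i\<le>n. of_nat (j choose i) * P i) = (\<Sum>i\<le>j. of_nat (j choose i) * P i)"
      using that by (intro sum.mono_neutral_right) auto
    also have "\<dots> = (dexp_fps lam (real r) * dexp_fps lam 1 ^ j) $ n"
      unfolding dexp_fps_power_binomial P_def ..
    also have "\<dots> = of_real (dfall lam (real j + real r) n / fact n)"
      by (simp add: dexp_fps_power dexp_fps_add add.commute)
    finally show ?thesis
      by (simp add: ffall_of_nat sum_distrib_left field_simps)
  qed
  from deg_rstirling2_rec_unique [OF this True] show ?thesis
    by (simp add: P_def deg_rstirling2_eq_rec field_simps)
next
  case False
  then have "(dexp_fps lam (real r) * (dexp_fps lam 1 - 1) ^ k) $ n = 0"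
    unfolding fps_mult_nth by (intro sum.neutral) (simp add: startsby_zero_power_prefix)
  with False show ?thesis
    by (simp add: deg_rstirling2_eq_rec deg_rstirling2_rec_eq_0)
qed

lemma deg_rbell_egf:
  "Abs_fps (\<lambda>n. of_real (deg_rbell lam r n x / fact n))
   = dexp_fps lam (real r) * (fps_exp 1 oo fps_const (of_real x) * (dexp_fps lam 1 - 1))"
proof (rule fps_ext)
  fix n
  let ?D = "dexp_fps lam (real r)" and ?E = "dexp_fps lam 1"
  have "(?D * (fps_exp 1 oo fps_const (of_real x) * (?E - 1))) $ n
        = (\<Sum>i\<le>n. (?D * (fps_const (of_real x) * (?E - 1)) ^ i) $ n / of_nat (fact i))"
    by (subst fps_mult_compose_nth) simp_all
  also have "\<dots> = (\<Sum>i\<le>n. of_real (deg_rstirling2 lam r n i * x ^ i / fact n))"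
  proof (rule sum.cong [OF refl])
    fix i
    have "(?D * (fps_const (of_real x) * (?E - 1)) ^ i) $ n
          = of_real x ^ i * (?D * (?E - 1) ^ i) $ n"
      by (simp add: power_mult_distrib mult.left_commute [of ?D] fps_const_power)
    then show "(?D * (fps_const (of_real x) * (?E - 1)) ^ i) $ n / of_nat (fact i)
               = of_real (deg_rstirling2 lam r n i * x ^ i / fact n)"
      by (simp add: deg_rstirling2_egf_nth field_simps)
  qed
  finally show "Abs_fps (\<lambda>n. of_real (deg_rbell lam r n x / fact n)) $ n
                = (?D * (fps_exp 1 oo fps_const (of_real x) * (?E - 1))) $ n"
    by (simp add: deg_rbell_def sum_divide_distrib mult.commute)
qed

theorem theorem8:
  fixes lam :: real and r :: nat and z :: complex
  defines "X \<equiv> (\<lambda>\<psi>. (\<lambda>m. cre (ann \<psi>) m + of_nat r * \<psi> m))"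
  shows "Abs_fps (\<lambda>n. complex_of_real (deg_rbell lam r n ((cmod z)^2) / fact n))
           = Abs_fps (\<lambda>n. braket (coherent z) (op_dfall lam X n (coherent z)) / of_nat (fact n))
         \<and> Abs_fps (\<lambda>n. braket (coherent z) (op_dfall lam X n (coherent z)) / of_nat (fact n))
           = dexp_fps lam (real r)
             * (fps_exp 1 oo (fps_const (complex_of_real ((cmod z)^2)) * (dexp_fps lam 1 - 1)))"
proof -
  have "Abs_fps (\<lambda>n. complex_of_real (deg_rbell lam r n ((cmod z)^2) / fact n))
        = Abs_fps (\<lambda>n. braket (coherent z) (op_dfall lam X n (coherent z)) / of_nat (fact n))"
    by (simp add: X_def braket_coherent_op_dfall)
  with deg_rbell_egf [of lam r "(cmod z)^2"] show ?thesis
    by simp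
qed

end
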